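(* There exist absolute constants $0<c<C$ such that for every odd $n\ge3$ and every $\alpha>0$, the function $hs_\alpha(x)=\min\big(\alpha,\frac{2\alpha}{n}\sum_{i=1}^nx_i\big)$ on $\{0,1\}^n$ satisfies $$c\,\frac{\alpha^2}{n}\le\|hs_\alpha\|_2^2-\widehat{hs_\alpha}(\emptyset)^2-\widehat{hs_\alpha}([n])^2\le C\,\frac{\alpha^2}{n}.$$
   Context: Fourier analysis: for $S\subseteq[n]$ let $\chi_S(x)=(-1)^{\sum_{i\in S}x_i}$ and $\hat f(S)=\mathbb E_{x\sim U(\{0,1\}^n)}[f(x)\chi_S(x)]$; $\|f\|_2^2=\mathbb E_x[f(x)^2]=\sum_S\hat f(S)^2$. *)

theory Defs
  imports Complex_Main "HOL-Library.FuncSet"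
begin

definition cube :: "nat \<Rightarrow> (nat \<Rightarrow> nat) set" where
  "cube n = {..<n} \<rightarrow>\<^sub>E {0, 1}"

definition chi :: "nat set \<Rightarrow> (nat \<Rightarrow> nat) \<Rightarrow> real" where
  "chi S x = (-1) ^ (\<Sum>i\<in>S. x i)"

definition expect :: "nat \<Rightarrow> ((nat \<Rightarrow> nat) \<Rightarrow> real) \<Rightarrow> real" where
  "expect n f = (\<Sum>x\<in>cube n. f x) / 2 ^ n"

definition fourier_coeff :: "nat \<Rightarrow> ((nat \<Rightarrow> nat) \<Rightarrow> real) \<Rightarrow> nat set \<Rightarrow> real" where
  "fourier_coeff n f S = expect n (\<lambda>x. f x * chi S x)"

definition norm2_sq :: "nat \<Rightarrow> ((nat \<Rightarrow> nat) \<Rightarrow> real) \<Rightarrow> real" where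
  "norm2_sq n f = expect n (\<lambda>x. (f x)^2)"

definition hs :: "nat \<Rightarrow> real \<Rightarrow> (nat \<Rightarrow> nat) \<Rightarrow> real" where
  "hs n \<alpha> x = min \<alpha> (2 * \<alpha> / real n * real (\<Sum>i<n. x i))"

end

(*
  Writing Z(x) = \<Sum>i (-1)^x_i, on the cube f = hs_\<alpha> = \<alpha> - (\<alpha>/n) max(0, Z), and the quantity to bound
  is E[h^2] for the residual h = f - f(\<emptyset>) - f([n]) \<chi>_[n]. From above it is at most
  E[(f - \<alpha>)^2] \<le> (\<alpha>/n)^2 E[Z^2] = \<alpha>^2/n. From below, Z is orthogonal to 1 and \<chi>_[n] (n \<ge> 2),
  so E[h Z] = E[f Z] = -(\<alpha>/n) E[max(0, Z) Z] = -\<alpha>/2 by the symmetry Z \<mapsto> -Z, and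
  Cauchy-Schwarz gives E[h^2] \<ge> \<alpha>^2/(4n).
*)

theory Submission
  imports Defs "HOL-Analysis.Convex"
begin

lemma card_cube: "card (cube n) = 2 ^ n"
  unfolding cube_def by (simp add: card_PiE numeral_2_eq_2)

lemma cube_coord: "x \<in> cube n \<Longrightarrow> i < n \<Longrightarrow> x i = 0 \<or> x i = 1"
  unfolding cube_def by auto

lemma expect_add: "expect n (\<lambda>x. u x + v x) = expect n u + expect n v"
  unfolding expect_def by (simp add: sum.distrib add_divide_distrib)

lemma expect_diff: "expect n (\<lambda>x. u x - v x) = expect n u - expect n v"
  unfolding expect_def by (simp add: sum_subtractf diff_divide_distrib)

lemma expect_cmult: "expect n (\<lambda>x. c * u x) = c * expect n u"
  unfolding expect_def by (simp add: sum_distrib_left)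

lemma expect_const: "expect n (\<lambda>x. c) = c"
  unfolding expect_def by (simp add: card_cube)

lemma expect_sum: "expect n (\<lambda>x. \<Sum>i\<in>I. u i x) = (\<Sum>i\<in>I. expect n (u i))"
  unfolding expect_def by (subst sum.swap) (simp add: sum_divide_distrib)

lemma expect_cong: "(\<And>x. x \<in> cube n \<Longrightarrow> u x = v x) \<Longrightarrow> expect n u = expect n v"
  unfolding expect_def by (simp cong: sum.cong)

lemma expect_mono: "(\<And>x. x \<in> cube n \<Longrightarrow> u x \<le> v x) \<Longrightarrow> expect n u \<le> expect n v"
  unfolding expect_def by (intro divide_right_mono sum_mono) auto

lemma expect_prod: "expect n (\<lambda>x. \<Prod>l<n. f l (x l)) = (\<Prod>l<n. (f l 0 + f l 1) / 2)"
proof -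
  have "(\<Sum>x\<in>cube n. \<Prod>l<n. f l (x l)) = (\<Prod>l<n. \<Sum>v\<in>{0,1::nat}. f l v)"
    unfolding cube_def by (rule prod_sum_PiE [symmetric]) auto
  then show ?thesis
    unfolding expect_def by (simp add: prod_dividef)
qed

lemma expect_Cauchy_Schwarz:
  "(expect n (\<lambda>x. u x * v x))\<^sup>2 \<le> expect n (\<lambda>x. (u x)\<^sup>2) * expect n (\<lambda>x. (v x)\<^sup>2)"
  using Cauchy_Schwarz_ineq_sum [of u v "cube n"]
  unfolding expect_def by (simp add: power_divide divide_right_mono flip: power2_eq_square)

lemma chi_empty [simp]: "chi {} x = 1"
  unfolding chi_def by simp

lemma chi_singleton: "chi {i} x = (-1) ^ x i"
  unfolding chi_def by simp

lemma chi_eq_prod: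
  assumes "S \<subseteq> {..<n}"
  shows "chi S x = (\<Prod>l<n. if l \<in> S then (-1) ^ x l else 1)"
proof -
  have "S = {..<n} \<inter> S" using assms by blast
  then show ?thesis
    unfolding chi_def power_sum by (metis prod.inter_restrict finite_lessThan)
qed

lemma expect_chi_mult:
  assumes "S \<subseteq> {..<n}" "T \<subseteq> {..<n}"
  shows "expect n (\<lambda>x. chi S x * chi T x) = (if S = T then 1 else 0)"
proof -
  define factor where
    "factor l v = (if l \<in> S then (-1) ^ v else 1) * (if l \<in> T then (-1) ^ v else (1::real))"
    for l v
  have factor_mean: "(factor l 0 + factor l 1) / 2 = (if l \<in> S \<longleftrightarrow> l \<in> T then 1 else 0)" for l
    by (auto simp: factor_def)
  have "expect n (\<lambda>x. chi S x * chi T x) = expect n (\<lambda>x. \<Prod>l<n. factor l (x l))"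
    using assms by (simp add: chi_eq_prod factor_def prod.distrib)
  also have "\<dots> = (\<Prod>l<n. if l \<in> S \<longleftrightarrow> l \<in> T then 1 else 0)"
    unfolding expect_prod factor_mean ..
  also have "\<dots> = (if S = T then 1 else 0)"
  proof (cases "S = T")
    case False
    then obtain l where "l < n" "\<not> (l \<in> S \<longleftrightarrow> l \<in> T)" using assms by blast
    with False show ?thesis by (simp add: prod_zero_iff) blast
  qed simp
  finally show ?thesis .
qed

lemma norm2_sq_minus_coeffs_eq:
  assumes "S \<subseteq> {..<n}" "T \<subseteq> {..<n}" "S \<noteq> T"
  shows "norm2_sq n f - (fourier_coeff n f S)\<^sup>2 - (fourier_coeff n f T)\<^sup>2
    = expect n (\<lambda>x. (f x - fourier_coeff n f S * chi S x - fourier_coeff n f T * chi T x)\<^sup>2)"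
proof -
  define a where "a = fourier_coeff n f S"
  define b where "b = fourier_coeff n f T"
  have "expect n (\<lambda>x. (f x - a * chi S x - b * chi T x)\<^sup>2)
    = expect n (\<lambda>x. (f x)\<^sup>2 - 2 * a * (f x * chi S x) - 2 * b * (f x * chi T x)
        + a\<^sup>2 * (chi S x * chi S x) + b\<^sup>2 * (chi T x * chi T x) + 2 * a * b * (chi S x * chi T x))"
    by (rule expect_cong) (simp add: power2_eq_square algebra_simps)
  also have "\<dots> = norm2_sq n f - a\<^sup>2 - b\<^sup>2"
    using assms
    by (simp add: expect_add expect_diff expect_cmult expect_chi_mult norm2_sq_def a_def b_def
        fourier_coeff_def power2_eq_square)
  finally show ?thesis by (simp add: a_def b_def)
qed

lemma norm2_sq_minus_mean_sq_le:
  "norm2_sq n f - (fourier_coeff n f {})\<^sup>2 \<le> expect n (\<lambda>x. (f x - c)\<^sup>2)"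
proof -
  define a where "a = fourier_coeff n f {}"
  have "expect n (\<lambda>x. (f x - c)\<^sup>2) = expect n (\<lambda>x. (f x)\<^sup>2 - 2 * c * f x + c\<^sup>2)"
    by (rule expect_cong) (simp add: power2_eq_square algebra_simps)
  also have "\<dots> = norm2_sq n f - 2 * c * a + c\<^sup>2"
    by (simp add: expect_add expect_diff expect_cmult expect_const norm2_sq_def a_def
        fourier_coeff_def)
  also have "\<dots> = norm2_sq n f - a\<^sup>2 + (a - c)\<^sup>2"
    by (simp add: power2_eq_square algebra_simps)
  finally show ?thesis by (simp add: a_def)
qed

definition sign_sum :: "nat \<Rightarrow> (nat \<Rightarrow> nat) \<Rightarrow> real" where
  "sign_sum n x = (\<Sum>i<n. chi {i} x)"

lemma expect_chi_mult_sign_sum: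
  assumes "S \<subseteq> {..<n}" "card S \<noteq> 1"
  shows "expect n (\<lambda>x. chi S x * sign_sum n x) = 0"
proof -
  have "S \<noteq> {i}" for i using assms(2) by auto
  then show ?thesis
    using assms(1) by (simp add: sign_sum_def sum_distrib_left expect_sum expect_chi_mult)
qed

lemma expect_sign_sum: "expect n (sign_sum n) = 0"
  using expect_chi_mult_sign_sum [of "{}" n] by simp

lemma expect_sign_sum_sq: "expect n (\<lambda>x. (sign_sum n x)\<^sup>2) = real n"
proof -
  have "expect n (\<lambda>x. (sign_sum n x)\<^sup>2) = (\<Sum>i<n. \<Sum>j<n. expect n (\<lambda>x. chi {i} x * chi {j} x))"
    unfolding sign_sum_def power2_eq_square sum_product expect_sum ..
  also have "\<dots> = (\<Sum>i<n. \<Sum>j<n. if i = j then 1 else 0)"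
    by (intro sum.cong refl) (simp add: expect_chi_mult)
  finally show ?thesis by simp
qed

definition flip :: "nat \<Rightarrow> (nat \<Rightarrow> nat) \<Rightarrow> (nat \<Rightarrow> nat)" where
  "flip n x = (\<lambda>i. if i < n then 1 - x i else undefined)"

lemma flip_in_cube: "x \<in> cube n \<Longrightarrow> flip n x \<in> cube n"
  unfolding cube_def flip_def by (auto simp: PiE_iff extensional_def)

lemma flip_flip: "x \<in> cube n \<Longrightarrow> flip n (flip n x) = x"
  unfolding cube_def flip_def by (rule ext) (force simp: PiE_iff extensional_def)

lemma expect_flip: "expect n (\<lambda>x. u (flip n x)) = expect n u"
  unfolding expect_def
  by (rule arg_cong [where f = "\<lambda>s. s / 2 ^ n"], rule sum.reindex_bij_witness [of _ "flip n" "flip n"])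
     (simp_all add: flip_in_cube flip_flip)

lemma sign_sum_flip: "x \<in> cube n \<Longrightarrow> sign_sum n (flip n x) = - sign_sum n x"
  unfolding sign_sum_def sum_negf [symmetric]
  by (intro sum.cong refl) (auto simp: chi_singleton flip_def dest: cube_coord)

lemma expect_pos_part_sign_sum:
  "expect n (\<lambda>x. max 0 (sign_sum n x) * sign_sum n x) = real n / 2"
proof -
  let ?Z = "sign_sum n"
  have "expect n (\<lambda>x. max 0 (?Z x) * ?Z x) = expect n (\<lambda>x. max 0 (- ?Z x) * (- ?Z x))"
    by (subst expect_flip [symmetric]) (rule expect_cong, simp add: sign_sum_flip)
  moreover have "expect n (\<lambda>x. max 0 (?Z x) * ?Z x) + expect n (\<lambda>x. max 0 (- ?Z x) * (- ?Z x))
      = expect n (\<lambda>x. (?Z x)\<^sup>2)"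
    unfolding expect_add [symmetric] by (rule expect_cong) (auto simp: max_def power2_eq_square)
  ultimately show ?thesis
    by (simp add: expect_sign_sum_sq)
qed

lemma sum_coords_eq_sign_sum:
  assumes "x \<in> cube n"
  shows "real (\<Sum>i<n. x i) = (real n - sign_sum n x) / 2"
proof -
  have "real (\<Sum>i<n. x i) = (\<Sum>i<n. (1 - chi {i} x) / 2)"
    unfolding of_nat_sum using assms
    by (intro sum.cong refl) (auto simp: chi_singleton dest: cube_coord)
  then show ?thesis
    by (simp add: sign_sum_def sum_subtractf flip: sum_divide_distrib)
qed

lemma hs_eq_sign_sum:
  assumes "x \<in> cube n" "n > 0" "\<alpha> \<ge> 0"
  shows "hs n \<alpha> x = \<alpha> - \<alpha> / real n * max 0 (sign_sum n x)"
proof -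
  define t where "t = \<alpha> / real n"
  have "t \<ge> 0" using assms by (simp add: t_def)
  have "hs n \<alpha> x = min \<alpha> (\<alpha> - t * sign_sum n x)"
  proof -
    have "2 * \<alpha> / real n * ((real n - sign_sum n x) / 2) = \<alpha> - t * sign_sum n x"
      using assms by (simp add: t_def field_simps)
    then show ?thesis
      unfolding hs_def sum_coords_eq_sign_sum [OF assms(1)] by simp
  qed
  also have "\<dots> = \<alpha> - t * max 0 (sign_sum n x)"
    using \<open>t \<ge> 0\<close> by (cases "sign_sum n x \<ge> 0") (simp_all add: mult_nonneg_nonneg mult_nonneg_nonpos)
  finally show ?thesis by (simp add: t_def)
qed

lemma hs_residual_le:
  assumes "n > 0" "\<alpha> \<ge> 0"
  shows "norm2_sq n (hs n \<alpha>) - (fourier_coeff n (hs n \<alpha>) {})\<^sup>2 - (fourier_coeff n (hs n \<alpha>) {..<n})\<^sup>2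
    \<le> \<alpha>\<^sup>2 / real n"
proof -
  let ?t = "\<alpha> / real n"
  have "norm2_sq n (hs n \<alpha>) - (fourier_coeff n (hs n \<alpha>) {})\<^sup>2 \<le> expect n (\<lambda>x. (hs n \<alpha> x - \<alpha>)\<^sup>2)"
    by (rule norm2_sq_minus_mean_sq_le)
  also have "\<dots> = ?t\<^sup>2 * expect n (\<lambda>x. (max 0 (sign_sum n x))\<^sup>2)"
    unfolding expect_cmult [symmetric] using assms
    by (intro expect_cong) (simp add: hs_eq_sign_sum power_divide power_mult_distrib)
  also have "\<dots> \<le> ?t\<^sup>2 * expect n (\<lambda>x. (sign_sum n x)\<^sup>2)"
    by (intro mult_left_mono expect_mono) (auto simp: max_def)
  also have "\<dots> = \<alpha>\<^sup>2 / real n"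
    unfolding expect_sign_sum_sq using assms by (simp add: power2_eq_square)
  finally show ?thesis
    using zero_le_power2 [of "fourier_coeff n (hs n \<alpha>) {..<n}"] by linarith
qed

lemma hs_residual_ge:
  assumes "n \<ge> 2" "\<alpha> \<ge> 0"
  shows "\<alpha>\<^sup>2 / (4 * real n)
    \<le> norm2_sq n (hs n \<alpha>) - (fourier_coeff n (hs n \<alpha>) {})\<^sup>2 - (fourier_coeff n (hs n \<alpha>) {..<n})\<^sup>2"
proof -
  let ?f = "hs n \<alpha>" and ?Z = "sign_sum n"
  define a where "a = fourier_coeff n ?f {}"
  define b where "b = fourier_coeff n ?f {..<n}"
  define h where "h x = ?f x - a * chi {} x - b * chi {..<n} x" for x
  have n_pos: "n > 0" using assms by simp
  have residual: "norm2_sq n ?f - a\<^sup>2 - b\<^sup>2 = expect n (\<lambda>x. (h x)\<^sup>2)"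
    unfolding a_def b_def h_def using n_pos by (intro norm2_sq_minus_coeffs_eq) auto
  have "expect n (\<lambda>x. ?f x * ?Z x)
      = expect n (\<lambda>x. \<alpha> * ?Z x - \<alpha> / real n * (max 0 (?Z x) * ?Z x))"
    using n_pos assms(2) by (intro expect_cong) (simp add: hs_eq_sign_sum algebra_simps)
  also have "\<dots> = - \<alpha> / 2"
    unfolding expect_diff expect_cmult expect_sign_sum expect_pos_part_sign_sum using n_pos by simp
  finally have corr_f: "expect n (\<lambda>x. ?f x * ?Z x) = - \<alpha> / 2" .
  have "expect n (\<lambda>x. h x * ?Z x) = expect n (\<lambda>x. ?f x * ?Z x
      - a * (chi {} x * ?Z x) - b * (chi {..<n} x * ?Z x))"
    by (intro expect_cong) (simp add: h_def algebra_simps)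
  also have "\<dots> = - \<alpha> / 2"
    using assms(1) by (simp add: expect_diff expect_cmult corr_f expect_sign_sum expect_chi_mult_sign_sum)
  finally have corr_h: "expect n (\<lambda>x. h x * ?Z x) = - \<alpha> / 2" .
  have "\<alpha>\<^sup>2 / 4 \<le> expect n (\<lambda>x. (h x)\<^sup>2) * real n"
    using expect_Cauchy_Schwarz [of n h ?Z] by (simp add: corr_h expect_sign_sum_sq power_divide)
  then show ?thesis
    using n_pos residual by (simp add: a_def b_def field_simps)
qed

theorem mainTheorem20:
  shows "\<exists>c C :: real. 0 < c \<and> c < C \<and>
    (\<forall>(n::nat) (\<alpha>::real). odd n \<and> n \<ge> 3 \<and> \<alpha> > 0 \<longrightarrow>
      c * \<alpha>^2 / real n \<le>
        norm2_sq n (hs n \<alpha>) - (fourier_coeff n (hs n \<alpha>) {})^2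
          - (fourier_coeff n (hs n \<alpha>) {..<n})^2
      \<and> norm2_sq n (hs n \<alpha>) - (fourier_coeff n (hs n \<alpha>) {})^2
          - (fourier_coeff n (hs n \<alpha>) {..<n})^2 \<le> C * \<alpha>^2 / real n)"
proof (intro exI conjI allI impI)
  fix n :: nat and \<alpha> :: real
  assume "odd n \<and> n \<ge> 3 \<and> \<alpha> > 0"
  then have "n \<ge> 2" "\<alpha> \<ge> 0" by auto
  show "1 / 4 * \<alpha>^2 / real n \<le> norm2_sq n (hs n \<alpha>) - (fourier_coeff n (hs n \<alpha>) {})^2
      - (fourier_coeff n (hs n \<alpha>) {..<n})^2"
    using hs_residual_ge [OF \<open>n \<ge> 2\<close> \<open>\<alpha> \<ge> 0\<close>] by simp
  show "norm2_sq n (hs n \<alpha>) - (fourier_coeff n (hs n \<alpha>) {})^2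
      - (fourier_coeff n (hs n \<alpha>) {..<n})^2 \<le> 1 * \<alpha>^2 / real n"
    using hs_residual_le [of n \<alpha>] \<open>n \<ge> 2\<close> \<open>\<alpha> \<ge> 0\<close> by simp
qed simp_all

end
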